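(* Let $\alpha\in(0,1]$, let $C\subset\mathbb{R}^2$ be an $\alpha$-fat convex body and $S\subset\mathbb{R}^2$ a finite point set. Suppose that $abc$ and $cda$ are two adjacent bounded (triangular) faces of the embedded graph $D_C(S)$, sharing the edge $ac$. Then $\angle abc+\angle cda\le 360^\circ-2\arcsin\alpha$.
   Context: A convex body is a convex compact set with nonempty interior; a homothet of $C$ is $\lambda C+x$ with $\lambda>0$. $C$ is $\alpha$-fat if $B(x,\alpha r)\subseteq C\subseteq B(x,r)$ for some $x$ and $r>0$. The Delaunay graph $D_C(S)$ is the graph with vertex set $S$ in which $p,q$ are adjacent iff some homothet of $C$ contains $p$ and $q$ and no other point of $S$, drawn in the plane with straight-line edges. *)

theory Defs
  imports "HOL-Analysis.Analysis"
begin

type_synonym pt = "real ^ 2"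

definition convex_body :: "pt set \<Rightarrow> bool" where
  "convex_body C \<longleftrightarrow> convex C \<and> compact C \<and> interior C \<noteq> {}"

definition fat :: "real \<Rightarrow> pt set \<Rightarrow> bool" where
  "fat \<alpha> C \<longleftrightarrow> (\<exists>x r. r > 0 \<and> cball x (\<alpha> * r) \<subseteq> C \<and> C \<subseteq> cball x r)"

definition homothet :: "pt set \<Rightarrow> real \<Rightarrow> pt \<Rightarrow> pt set" where
  "homothet C l t = (\<lambda>y. l *\<^sub>R y + t) ` C"

definition delaunay_edge :: "pt set \<Rightarrow> pt set \<Rightarrow> pt \<Rightarrow> pt \<Rightarrow> bool" where
  "delaunay_edge C S p q \<longleftrightarrow> p \<in> S \<and> q \<in> S \<and> p \<noteq> q \<and>
     (\<exists>l t. l > 0 \<and> p \<in> homothet C l t \<and> q \<in> homothet C l t \<and>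
            homothet C l t \<inter> S \<subseteq> {p, q})"

definition delaunay_drawing :: "pt set \<Rightarrow> pt set \<Rightarrow> pt set" where
  "delaunay_drawing C S = S \<union> \<Union>{closed_segment p q | p q. delaunay_edge C S p q}"

definition triangular_face :: "pt set \<Rightarrow> pt set \<Rightarrow> pt \<Rightarrow> pt \<Rightarrow> pt \<Rightarrow> bool" where
  "triangular_face C S a b c \<longleftrightarrow>
     delaunay_edge C S a b \<and> delaunay_edge C S b c \<and> delaunay_edge C S c a \<and>
     \<not> collinear {a, b, c} \<and>
     interior (convex hull {a, b, c}) \<in> components (- delaunay_drawing C S)"

definition angle :: "pt \<Rightarrow> pt \<Rightarrow> pt \<Rightarrow> real" where
  "angle a b c = arccos (((a - b) \<bullet> (c - b)) / (norm (a - b) * norm (c - b)))"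

end

theory Submission
  imports Defs
begin

(* Let H be a homothet of C through a and c containing no other point of S. Since abc and cda
   are distinct faces, b and d lie outside H on opposite sides of the line ac. H contains a ball
   B(x, alpha r) and lies in B(x, r); by symmetry x is at least as close to c as to a.
   A line separating b from H also separates b from a, c and the ball, which forces b outside
   the disc through a and c that touches, at a, the tangent from a to the ball on b's side. By
   the inscribed angle theorem, angle abc is then at most pi minus the angle theta between ac and
   that tangent. Writing theta = gamma + phi, where gamma = arcsin (alpha r / |x - a|) is half the
   angle under which a sees the ball and phi the signed angle from ac to ax, the two signs of phi
   for b and d cancel in the sum, leaving 2 pi - 2 gamma <= 2 pi - 2 arcsin alpha. *)

definition cross2 :: "pt \<Rightarrow> pt \<Rightarrow> real" where
  "cross2 u v = u$1 * v$2 - u$2 * v$1"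

lemma inner_pt: "inner (u::pt) v = u$1 * v$1 + u$2 * v$2"
  by (simp add: inner_vec_def sum_2)

lemma cross2_scaleR_left: "cross2 (k *\<^sub>R u) v = k * cross2 u v"
  and cross2_scaleR_right: "cross2 u (k *\<^sub>R v) = k * cross2 u v"
  and cross2_add_left: "cross2 (u + w) v = cross2 u v + cross2 w v"
  and cross2_add_right: "cross2 u (v + w) = cross2 u v + cross2 u w"
  and cross2_self: "cross2 u u = 0"
  by (simp_all add: cross2_def algebra_simps)

lemma cross2_triangle_rotate: "cross2 (a - b) (c - b) = cross2 (c - a) (b - a)"
  and cross2_triangle_swap: "cross2 (a - c) (b - c) = - cross2 (c - a) (b - a)"
  by (simp_all add: cross2_def algebra_simps)

lemma norm_pt_sq: "(norm (u::pt))\<^sup>2 = (u$1)\<^sup>2 + (u$2)\<^sup>2"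
  unfolding power2_norm_eq_inner inner_pt by (simp add: power2_eq_square)

lemma lagrange_identity_pt: "(norm u)\<^sup>2 * (norm v)\<^sup>2 = (inner u v)\<^sup>2 + (cross2 u v)\<^sup>2"
  unfolding norm_pt_sq by (simp add: inner_pt cross2_def power2_eq_square algebra_simps)

lemma inner_in_frame:
  assumes "norm e = 1" and "\<sigma>\<^sup>2 = 1"
  shows "inner u v = inner e u * inner e v + (\<sigma> * cross2 e u) * (\<sigma> * cross2 e v)"
proof -
  have "inner e u * inner e v + (\<sigma> * cross2 e u) * (\<sigma> * cross2 e v)
      = (inner e e) * inner u v + (\<sigma>\<^sup>2 - 1) * (cross2 e u * cross2 e v)"
    by (simp add: inner_pt cross2_def power2_eq_square algebra_simps)
  then show ?thesis using assms by (simp add: dot_square_norm)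
qed

lemma cross2_cramer: "cross2 u v *\<^sub>R w = cross2 w v *\<^sub>R u + cross2 u w *\<^sub>R v"
  unfolding vec_eq_iff forall_2 cross2_def by (simp add: algebra_simps)

lemma parallel_if_cross2_eq_0:
  assumes "cross2 u w = 0"
  shows "inner u u *\<^sub>R w = inner u w *\<^sub>R u"
  using assms unfolding vec_eq_iff forall_2 inner_pt cross2_def vector_scaleR_component real_scaleR_def by algebra

lemma collinear_if_cross2_eq_0:
  assumes "cross2 (c - a) (b - a) = 0"
  shows "collinear {a, b, c}"
proof (cases "c = a")
  case False
  then have "b - a = (1 / inner (c - a) (c - a)) *\<^sub>R (inner (c - a) (c - a) *\<^sub>R (b - a))"
    by simp
  also have "\<dots> = (inner (c - a) (b - a) / inner (c - a) (c - a)) *\<^sub>R (c - a)"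
    unfolding parallel_if_cross2_eq_0[OF assms] by simp
  finally have "b - a = \<dots>" .
  then have "collinear {0, c - a, b - a}" by (metis collinear_lemma)
  then have "collinear {c, a, b}" by (simp add: collinear_3[of c a b])
  moreover have "{c, a, b} = {a, b, c}" by blast
  ultimately show ?thesis by simp
qed (simp add: collinear_3_expand)

lemma unit_inner_le_radius:
  fixes n1 n2 v1 v2 R :: real
  assumes "n1\<^sup>2 + n2\<^sup>2 = 1" "v1\<^sup>2 + v2\<^sup>2 \<le> R\<^sup>2" "0 \<le> R"
  shows "n1 * v1 + n2 * v2 \<le> R"
proof (rule power2_le_imp_le)
  have "(n1 * v1 + n2 * v2)\<^sup>2 = (n1\<^sup>2 + n2\<^sup>2) * (v1\<^sup>2 + v2\<^sup>2) - (n1 * v2 - n2 * v1)\<^sup>2"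
    by (simp add: power2_eq_square algebra_simps)
  also have "\<dots> = v1\<^sup>2 + v2\<^sup>2 - (n1 * v2 - n2 * v1)\<^sup>2" using assms(1) by simp
  also have "\<dots> \<le> R\<^sup>2" by (rule order_trans[OF _ assms(2)]) simp
  finally show "(n1 * v1 + n2 * v2)\<^sup>2 \<le> R\<^sup>2" .
qed fact

text \<open>The next three lemmas are stated in coordinates with a at the origin and c = (L, 0); x = (p, q)
  is the centre of the ball of radius \<rho>, and u = (u1, u2) a unit direction into the upper half
  plane. The disc with centre (R u2, - R u1) and radius R touches the direction u at the origin;
  for R = L / (2 u2) it also passes through c.\<close>

lemma ball_support_ge_tangent_disc_support:
  fixes R p q \<rho> u1 u2 n1 n2 :: real
  assumes u: "u1\<^sup>2 + u2\<^sup>2 = 1" "u2 > 0" and n: "n1\<^sup>2 + n2\<^sup>2 = 1" "n2 > u1"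
    and x: "R * u2 \<le> p" "u1 * q - u2 * p \<ge> - \<rho>" "u1 * p + u2 * q \<ge> 0"
  shows "n1 * (R * u2) + n2 * (- R * u1) + R \<le> n1 * p + n2 * q + \<rho>"
proof -
  \<comment> \<open>n + (u2, - u1) is a nonnegative combination of u and (1, 0), and x minus the centre
    of the disc, (w1, w2), has nonnegative inner product with both.\<close>
  define w1 w2 where "w1 = p - R * u2" and "w2 = q + R * u1"
  have "0 \<le> 1 + n1 * u2 - u1 * n2"
    using unit_inner_le_radius[OF n(1), of "- u2" u1 1] u by (simp add: algebra_simps)
  moreover have "0 \<le> u1 * w1 + u2 * w2"
    using x(3) by (simp add: w1_def w2_def algebra_simps)
  ultimately have "0 \<le> (n2 - u1) * (u1 * w1 + u2 * w2) + (1 + n1 * u2 - u1 * n2) * w1"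
    using n(2) x(1) by (simp add: w1_def)
  also have "\<dots> = u2 * ((n1 + u2) * w1 + (n2 - u1) * w2) - (u1\<^sup>2 + u2\<^sup>2 - 1) * w1"
    by (simp add: power2_eq_square algebra_simps)
  finally have "0 \<le> (n1 + u2) * w1 + (n2 - u1) * w2"
    using u by (simp add: zero_le_mult_iff)
  also have "\<dots> = n1 * p + n2 * q - (n1 * (R * u2) + n2 * (- R * u1)) - (u1 * q - u2 * p) - R * (u1\<^sup>2 + u2\<^sup>2)"
    by (simp add: w1_def w2_def power2_eq_square algebra_simps)
  finally show ?thesis using u x(2) by simp
qed

lemma chord_disc_support_le:
  fixes L o2 R b1 b2 n1 n2 :: real
  assumes b: "(b1 - L / 2)\<^sup>2 + (b2 - o2)\<^sup>2 \<le> R\<^sup>2" "b2 > 0"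
    and chord: "R\<^sup>2 = o2\<^sup>2 + L\<^sup>2 / 4" "L > 0" "R \<ge> 0"
    and n: "n1\<^sup>2 + n2\<^sup>2 = 1" "o2 + R * n2 \<le> 0"
  shows "n1 * b1 + n2 * b2 \<le> max 0 (n1 * L)"
proof -
  \<comment> \<open>The segment from b to the support point w of the disc crosses the first axis inside the
    disc, hence inside the chord [0, L], at a point s with n \<bullet> s \<ge> n \<bullet> b.\<close>
  define w1 w2 where "w1 = L / 2 + R * n1" and "w2 = o2 + R * n2"
  have w: "(w1 - L / 2)\<^sup>2 + (w2 - o2)\<^sup>2 = R\<^sup>2"
    using n(1) by (simp add: w1_def w2_def power_mult_distrib flip: distrib_left)
  have "n1 * w1 + n2 * w2 = n1 * (L / 2) + n2 * o2 + R * (n1\<^sup>2 + n2\<^sup>2)"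
    by (simp add: w1_def w2_def power2_eq_square algebra_simps)
  then have nb: "n1 * b1 + n2 * b2 \<le> n1 * w1 + n2 * w2"
    using unit_inner_le_radius[OF n(1) b(1) chord(3)] n(1) by (simp add: algebra_simps)
  define t where "t = b2 / (b2 - w2)"
  have t: "0 < t" "t \<le> 1" using b(2) n(2) by (auto simp: t_def w2_def field_simps)
  define s where "s = (1 - t) * b1 + t * w1"
  have axis: "(1 - t) * b2 + t * w2 = 0"
    using b(2) n(2) by (simp add: t_def w2_def field_simps)
  have "(s - L / 2)\<^sup>2 + (0 - o2)\<^sup>2
      = (1 - t) * ((b1 - L / 2)\<^sup>2 + (b2 - o2)\<^sup>2) + t * ((w1 - L / 2)\<^sup>2 + (w2 - o2)\<^sup>2)
        - t * (1 - t) * ((b1 - w1)\<^sup>2 + (b2 - w2)\<^sup>2)"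
    unfolding s_def axis[symmetric] by (simp add: power2_eq_square field_simps)
  also have "\<dots> \<le> (1 - t) * R\<^sup>2 + t * R\<^sup>2"
  proof -
    have "(1 - t) * ((b1 - L / 2)\<^sup>2 + (b2 - o2)\<^sup>2) \<le> (1 - t) * R\<^sup>2"
      using b(1) t by (simp add: mult_left_mono)
    moreover have "0 \<le> t * (1 - t) * ((b1 - w1)\<^sup>2 + (b2 - w2)\<^sup>2)"
      using t by simp
    ultimately show ?thesis unfolding w by linarith
  qed
  finally have "s * (s - L) \<le> 0"
    using chord(1) by (simp add: power2_eq_square algebra_simps)
  then have s: "0 \<le> s" "s \<le> L"
    using chord(2) by (auto simp: mult_le_0_iff)
  have "n1 * s - (n1 * b1 + n2 * b2)
      = t * (n1 * w1 + n2 * w2 - (n1 * b1 + n2 * b2)) - n2 * ((1 - t) * b2 + t * w2)"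
    by (simp add: s_def algebra_simps)
  also have "\<dots> = t * (n1 * w1 + n2 * w2 - (n1 * b1 + n2 * b2))"
    unfolding axis by simp
  also have "\<dots> \<ge> 0" using nb t by simp
  finally have "n1 * b1 + n2 * b2 \<le> n1 * s" by simp
  also have "\<dots> \<le> max 0 (n1 * L)"
    using s mult_left_mono[of s L n1] mult_nonpos_nonneg[of n1 s] by (cases "n1 \<ge> 0") auto
  finally show ?thesis .
qed

lemma separated_point_outside_tangent_disc:
  fixes L p q \<rho> u1 u2 b1 b2 n1 n2 :: real
  assumes u: "u1\<^sup>2 + u2\<^sup>2 = 1" "u2 > 0"
    and x: "L \<le> 2 * p" "u1 * q - u2 * p \<ge> - \<rho>" "u1 * p + u2 * q \<ge> 0"
    and L: "L > 0" and b2: "b2 > 0" and n: "n1\<^sup>2 + n2\<^sup>2 = 1"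
    and sep: "n1 * b1 + n2 * b2 > 0" "n1 * b1 + n2 * b2 > n1 * L"
      "n1 * b1 + n2 * b2 > n1 * p + n2 * q + \<rho>"
  shows "(b1\<^sup>2 - L * b1 + b2\<^sup>2) * u2 + L * b2 * u1 \<ge> 0"
proof (rule ccontr)
  assume outside: "\<not> ?thesis"
  define R where "R = L / (2 * u2)"
  have R: "R > 0" and L_eq: "L = 2 * R * u2" using L u by (simp_all add: R_def)
  have "u2 * ((b1 - R * u2)\<^sup>2 + (b2 + R * u1)\<^sup>2 - R\<^sup>2)
      = (b1\<^sup>2 - L * b1 + b2\<^sup>2) * u2 + L * b2 * u1 + u2 * R\<^sup>2 * (u1\<^sup>2 + u2\<^sup>2 - 1)"
    unfolding L_eq by (simp add: power2_eq_square algebra_simps)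
  then have "u2 * ((b1 - R * u2)\<^sup>2 + (b2 + R * u1)\<^sup>2 - R\<^sup>2) < 0"
    using outside u(1) by simp
  then have inside: "(b1 - R * u2)\<^sup>2 + (b2 + R * u1)\<^sup>2 \<le> R\<^sup>2"
    using u(2) by (simp add: mult_less_0_iff)
  have below: "n1 * b1 + n2 * b2 \<le> n1 * (R * u2) + n2 * (- R * u1) + R"
    using unit_inner_le_radius[OF n inside] R by (simp add: algebra_simps)
  show False
  proof (cases "n2 > u1")
    case True
    have "R * u2 \<le> p" using x(1) L_eq by simp
    from ball_support_ge_tangent_disc_support[OF u n True this x(2,3)]
    show False using below sep(3) by linarith
  next
    case False
    have "(b1 - L / 2)\<^sup>2 + (b2 - - R * u1)\<^sup>2 \<le> R\<^sup>2" using inside L_eq by simp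
    moreover have "R\<^sup>2 = (- R * u1)\<^sup>2 + L\<^sup>2 / 4"
      using u(1) unfolding L_eq by (simp add: power2_eq_square algebra_simps flip: distrib_left)
    moreover have "- R * u1 + R * n2 \<le> 0" using False R by (simp add: algebra_simps)
    ultimately have "n1 * b1 + n2 * b2 \<le> max 0 (n1 * L)"
      using chord_disc_support_le[of b1 L b2 "- R * u1" R n1 n2] b2 L R n by linarith
    then show False using sep(1,2) by linarith
  qed
qed

text \<open>The direction \<theta> is that of the tangent from the origin to the ball with centre (p, q) and
  radius \<rho>, or of a ray through the ball if the origin lies inside it.\<close>

lemma tangent_direction:
  fixes p q \<rho> :: real
  assumes p: "p > 0" and \<rho>: "\<rho> \<ge> 0"
  defines "\<theta> \<equiv> arcsin (min 1 (\<rho> / sqrt (p\<^sup>2 + q\<^sup>2))) + arctan (q / p)"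
  shows "cos \<theta> * q - sin \<theta> * p \<ge> - \<rho>" and "cos \<theta> * p + sin \<theta> * q \<ge> 0"
    and "\<theta> < pi"
proof -
  define d s \<phi> where "d = sqrt (p\<^sup>2 + q\<^sup>2)" and "s = min 1 (\<rho> / d)" and "\<phi> = arctan (q / p)"
  have d: "d > 0" using p by (simp add: d_def add_pos_nonneg)
  have s: "0 \<le> s" "s \<le> 1" "s * d \<le> \<rho>"
    using \<rho> d by (auto simp: s_def min_def field_simps)
  have "sqrt (1 + (q / p)\<^sup>2) = d / p"
    using p by (simp add: d_def power_divide real_sqrt_divide field_simps)
  then have pq: "p = d * cos \<phi>" "q = d * sin \<phi>"
    using p d by (simp_all add: \<phi>_def cos_arctan sin_arctan)
  have \<theta>: "\<theta> = arcsin s + \<phi>" by (simp add: \<theta>_def s_def d_def \<phi>_def)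
  have "cos \<theta> * q - sin \<theta> * p = d * sin (\<phi> - \<theta>)"
    unfolding pq sin_diff by (simp add: algebra_simps)
  also have "\<dots> = - (s * d)" using s by (simp add: \<theta>)
  finally show "cos \<theta> * q - sin \<theta> * p \<ge> - \<rho>" using s by simp
  have "cos \<theta> * p + sin \<theta> * q = d * cos (\<theta> - \<phi>)"
    unfolding pq cos_diff by (simp add: algebra_simps)
  also have "\<dots> = d * sqrt (1 - s\<^sup>2)" using s by (simp add: \<theta> cos_arcsin)
  finally show "cos \<theta> * p + sin \<theta> * q \<ge> 0" using d s by (simp add: abs_square_le_1)
  have "0 \<le> arcsin s" "arcsin s \<le> pi / 2" using s arcsin_ubound[of s] by (simp_all add: arcsin_nonneg)
  then show "\<theta> < pi"
    using arctan_bounded[of "q / p"] unfolding \<theta> \<phi>_def by linarith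
qed

lemma add_le_pi_if_sin_nonneg:
  fixes A \<theta> :: real
  assumes "0 \<le> A" "A \<le> pi" "0 < \<theta>" "\<theta> < pi" "sin (A + \<theta>) \<ge> 0"
  shows "A + \<theta> \<le> pi"
  using sin_lt_zero[of "A + \<theta>"] assms by linarith

lemma inner_div_norms_bounds:
  "- 1 \<le> inner u v / (norm u * norm v)" "inner u v / (norm u * norm v) \<le> 1"
proof -
  have "\<bar>inner u v / (norm u * norm v)\<bar> \<le> 1"
    using Cauchy_Schwarz_ineq2[of u v] by (cases "norm u * norm v = 0") (auto simp: abs_divide)
  then show "- 1 \<le> inner u v / (norm u * norm v)" "inner u v / (norm u * norm v) \<le> 1"
    by (simp_all only: abs_le_iff) linarith
qed

lemma angle_commute: "angle a b c = angle c b a"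
  by (simp add: angle_def inner_commute mult.commute)

lemma angle_nonneg: "0 \<le> angle a b c"
  and angle_le_pi: "angle a b c \<le> pi"
  unfolding angle_def using arccos_lbound arccos_ubound inner_div_norms_bounds by blast+

lemma cos_angle: "cos (angle a b c) = inner (a - b) (c - b) / (norm (a - b) * norm (c - b))"
  unfolding angle_def by (rule cos_arccos) (rule inner_div_norms_bounds)+

lemma sin_angle:
  assumes "a \<noteq> b" "c \<noteq> b"
  shows "sin (angle a b c) = \<bar>cross2 (a - b) (c - b)\<bar> / (norm (a - b) * norm (c - b))"
proof -
  define N where "N = norm (a - b) * norm (c - b)"
  have N: "N > 0" using assms by (simp add: N_def)
  have N2: "N\<^sup>2 = (inner (a - b) (c - b))\<^sup>2 + (cross2 (a - b) (c - b))\<^sup>2"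
    using lagrange_identity_pt[of "a - b" "c - b"] by (simp add: N_def power_mult_distrib)
  have "1 - (inner (a - b) (c - b) / N)\<^sup>2 = (N\<^sup>2 - (inner (a - b) (c - b))\<^sup>2) / N\<^sup>2"
    using N by (simp add: power_divide field_simps)
  also have "\<dots> = (cross2 (a - b) (c - b) / N)\<^sup>2"
    using N2 by (simp add: power_divide)
  finally show ?thesis
    unfolding angle_def using inner_div_norms_bounds[of "a - b" "c - b"] N
    by (simp add: sin_arccos N_def[symmetric])
qed

lemma angle_le_pi_minus:
  assumes "a \<noteq> b" "c \<noteq> b" "\<theta> < pi"
    and "0 < \<theta> \<Longrightarrow> inner (a - b) (c - b) * sin \<theta> + \<bar>cross2 (a - b) (c - b)\<bar> * cos \<theta> \<ge> 0"
  shows "angle a b c \<le> pi - \<theta>"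
proof (cases "\<theta> \<le> 0")
  case True
  then show ?thesis using angle_le_pi[of a b c] by linarith
next
  case False
  define i X N where "i = inner (a - b) (c - b)" and "X = \<bar>cross2 (a - b) (c - b)\<bar>"
    and "N = norm (a - b) * norm (c - b)"
  have "sin (angle a b c + \<theta>) = X / N * cos \<theta> + i / N * sin \<theta>"
    using assms(1,2) by (simp add: sin_add sin_angle cos_angle i_def X_def N_def)
  also have "\<dots> = (i * sin \<theta> + X * cos \<theta>) / N"
    by (simp add: add_divide_distrib)
  also have "\<dots> \<ge> 0" using assms(4) False by (simp add: i_def X_def N_def)
  finally have "angle a b c + \<theta> \<le> pi"
    using False assms(3) angle_nonneg angle_le_pi by (intro add_le_pi_if_sin_nonneg) auto
  then show ?thesis by simp
qed

lemma separating_unit_normal: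
  fixes H :: "'a::euclidean_space set"
  assumes "convex H" "closed H" "b \<notin> H" "H \<noteq> {}"
  obtains n where "norm n = 1" "\<And>y. y \<in> H \<Longrightarrow> inner n y < inner n b"
proof -
  obtain m \<beta> where m: "inner m b < \<beta>" "\<And>y. y \<in> H \<Longrightarrow> \<beta> < inner m y"
    using separating_hyperplane_closed_point[OF assms(1-3)] by blast
  have "m \<noteq> 0" using m assms(4) by force
  show ?thesis
  proof
    show "norm (- (1 / norm m) *\<^sub>R m) = 1" using \<open>m \<noteq> 0\<close> by simp
    show "inner (- (1 / norm m) *\<^sub>R m) y < inner (- (1 / norm m) *\<^sub>R m) b" if "y \<in> H" for y
      using m(1) m(2)[OF that] \<open>m \<noteq> 0\<close> by (simp add: divide_strict_right_mono)
  qed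
qed

lemma dist_le_dist_iff_inner:
  fixes a c x :: "'a::real_inner"
  shows "dist x c \<le> dist x a \<longleftrightarrow> (norm (c - a))\<^sup>2 \<le> 2 * inner (c - a) (x - a)"
proof -
  have "x - c = (x - a) - (c - a)" by simp
  then have "(norm (x - c))\<^sup>2 = (norm (x - a))\<^sup>2 - 2 * inner (c - a) (x - a) + (norm (c - a))\<^sup>2"
    by (simp add: power2_norm_eq_inner inner_diff_left inner_diff_right inner_commute)
  moreover have "dist x c \<le> dist x a \<longleftrightarrow> (norm (x - c))\<^sup>2 \<le> (norm (x - a))\<^sup>2"
    using abs_le_square_iff[of "norm (x - c)" "norm (x - a)"] by (simp add: dist_norm)
  ultimately show ?thesis by linarith
qed

lemma separating_unit_normal_from_ball:
  fixes H :: "'a::euclidean_space set"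
  assumes "convex H" "closed H" "a \<in> H" "c \<in> H" "b \<notin> H" "cball x \<rho> \<subseteq> H" "0 \<le> \<rho>"
  obtains n where "norm n = 1" "0 < inner n (b - a)" "inner n (c - a) < inner n (b - a)"
    "inner n (x - a) + \<rho> < inner n (b - a)"
proof -
  obtain n where n: "norm n = 1" "\<And>y. y \<in> H \<Longrightarrow> inner n y < inner n b"
    using separating_unit_normal[OF assms(1,2,5)] assms(3) by blast
  have "x + \<rho> *\<^sub>R n \<in> H" using assms(6,7) n(1) by (auto simp: dist_norm)
  from n(2)[OF this] have "inner n (x - a) + \<rho> < inner n (b - a)"
    using n(1) by (simp add: inner_diff_right inner_add_right dot_square_norm)
  moreover have "0 < inner n (b - a)" "inner n (c - a) < inner n (b - a)"
    using n(2)[OF assms(3)] n(2)[OF assms(4)] by (simp_all add: inner_diff_right)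
  ultimately show ?thesis using n(1) that by blast
qed

lemma angle_le_pi_minus_tangent_angle:
  fixes H :: "pt set" and \<sigma> \<rho> :: real
  assumes H: "convex H" "closed H" "a \<in> H" "c \<in> H" "b \<notin> H" "cball x \<rho> \<subseteq> H" "0 \<le> \<rho>"
    and nearer: "dist x c \<le> dist x a" and "a \<noteq> c"
    and side: "\<sigma>\<^sup>2 = 1" "\<sigma> * cross2 (c - a) (b - a) > 0"
  shows "angle a b c \<le> pi - (arcsin (min 1 (\<rho> / dist x a))
           + arctan (\<sigma> * cross2 (c - a) (x - a) / inner (c - a) (x - a)))"
proof -
  define L e where "L = norm (c - a)" and "e = (1 / L) *\<^sub>R (c - a)"
  have L: "L > 0" and e: "norm e = 1" and ce: "c - a = L *\<^sub>R e"
    using \<open>a \<noteq> c\<close> by (auto simp: L_def e_def)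
  \<comment> \<open>coordinates with origin a, first axis along ac and second axis towards b\<close>
  define P Q where "P v = inner e v" and "Q v = \<sigma> * cross2 e v" for v
  have frame: "inner u v = P u * P v + Q u * Q v" for u v
    unfolding P_def Q_def by (rule inner_in_frame[OF e side(1)])
  have along: "inner (c - a) v = L * P v" and across: "\<sigma> * cross2 (c - a) v = L * Q v" for v
    by (simp_all add: ce P_def Q_def cross2_scaleR_left)
  define p q b1 b2 where "p = P (x - a)" and "q = Q (x - a)" and "b1 = P (b - a)" and "b2 = Q (b - a)"
  have b2: "b2 > 0"
    using side(2) L across[of "b - a"] by (simp add: b2_def zero_less_mult_iff)
  have "L * L \<le> 2 * (L * p)"
    using nearer along[of "x - a"] by (simp add: dist_le_dist_iff_inner p_def power2_eq_square L_def)
  then have Lp: "L \<le> 2 * p" using L by simp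
  have p: "p > 0" using L Lp by simp
  have dist_xa: "dist x a = sqrt (p\<^sup>2 + q\<^sup>2)"
    using frame[of "x - a" "x - a"] by (simp add: dist_norm norm_eq_sqrt_inner p_def q_def power2_eq_square)
  have arg: "\<sigma> * cross2 (c - a) (x - a) / inner (c - a) (x - a) = q / p"
    using L by (simp add: along across[simplified mult.assoc[symmetric]] p_def q_def)
  obtain n where n: "norm n = 1" "0 < inner n (b - a)" "inner n (c - a) < inner n (b - a)"
    "inner n (x - a) + \<rho> < inner n (b - a)"
    using separating_unit_normal_from_ball[OF H] .
  define n1 n2 where "n1 = P n" and "n2 = Q n"
  have n_coord: "inner n v = n1 * P v + n2 * Q v" for v
    unfolding n1_def n2_def by (rule frame)
  have n12: "n1\<^sup>2 + n2\<^sup>2 = 1"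
    using n_coord[of n] n(1) by (simp add: n1_def n2_def power2_eq_square dot_square_norm)
  have c_coord: "P (c - a) = L" "Q (c - a) = 0"
    using e by (simp_all add: P_def Q_def ce cross2_scaleR_right cross2_self dot_square_norm)
  define \<theta> where "\<theta> = arcsin (min 1 (\<rho> / sqrt (p\<^sup>2 + q\<^sup>2))) + arctan (q / p)"
  note tangent = tangent_direction[OF p H(7), of q, folded \<theta>_def]
  have inner_b: "inner (a - b) (c - b) = b1\<^sup>2 - L * b1 + b2\<^sup>2"
  proof -
    have "inner (a - b) (c - b) = inner (b - a) (b - a) - inner (c - a) (b - a)"
      by (simp add: inner_diff_left inner_diff_right inner_commute)
    then show ?thesis
      by (simp add: frame[of "b - a"] along b1_def b2_def power2_eq_square)
  qed
  have cross_b: "\<bar>cross2 (a - b) (c - b)\<bar> = L * b2"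
  proof -
    have "\<bar>\<sigma>\<bar> = 1" using side(1) by (auto simp: power2_eq_1_iff)
    then have "\<bar>cross2 (a - b) (c - b)\<bar> = \<bar>\<sigma> * cross2 (c - a) (b - a)\<bar>"
      by (simp add: cross2_triangle_rotate abs_mult)
    then show ?thesis using side(2) across[of "b - a"] by (simp add: b2_def)
  qed
  have "b \<noteq> a" "b \<noteq> c" using side(2) by (auto simp: cross2_def)
  moreover have "(b1\<^sup>2 - L * b1 + b2\<^sup>2) * sin \<theta> + L * b2 * cos \<theta> \<ge> 0" if "0 < \<theta>"
  proof (rule separated_point_outside_tangent_disc[OF _ _ Lp tangent(1,2) L b2 n12])
    show "(cos \<theta>)\<^sup>2 + (sin \<theta>)\<^sup>2 = 1" by simp
    show "0 < sin \<theta>" using that tangent(3) by (rule sin_gt_zero)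
    show "0 < n1 * b1 + n2 * b2" "n1 * L < n1 * b1 + n2 * b2" "n1 * p + n2 * q + \<rho> < n1 * b1 + n2 * b2"
      using n(2-4) unfolding n_coord by (simp_all add: c_coord b1_def b2_def p_def q_def)
  qed
  ultimately show ?thesis
    unfolding dist_xa arg \<theta>_def[symmetric]
    using angle_le_pi_minus[of a b c \<theta>] tangent(3) unfolding inner_b cross_b by blast
qed

lemma triangle_interiors_meet_if_same_side:
  assumes abc: "\<not> collinear {a, b, c}" and cda: "\<not> collinear {c, d, a}"
    and same_side: "cross2 (c - a) (b - a) * cross2 (c - a) (d - a) > 0"
  shows "interior (convex hull {a, b, c}) \<inter> interior (convex hull {c, d, a}) \<noteq> {}"
proof -
  \<comment> \<open>Points near the midpoint of ac, pushed slightly towards b, lie in both open triangles.\<close>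
  have dim2: "DIM(pt) = 2" by simp
  define Xb Xd where "Xb = cross2 (c - a) (b - a)" and "Xd = cross2 (c - a) (d - a)"
  have Xd: "Xd \<noteq> 0" and ratio: "Xb / Xd > 0"
    using same_side by (auto simp: Xb_def Xd_def zero_less_mult_iff zero_less_divide_iff)
  define y where "y \<epsilon> = a + ((1 - \<epsilon>) / 2) *\<^sub>R (c - a) + \<epsilon> *\<^sub>R (b - a)" for \<epsilon>
  define z1 z2 where "z1 \<epsilon> = cross2 (y \<epsilon> - a) (d - a) / Xd"
    and "z2 \<epsilon> = cross2 (c - a) (y \<epsilon> - a) / Xd" for \<epsilon>
  have y_abc: "y \<epsilon> = ((1 - \<epsilon>) / 2) *\<^sub>R a + \<epsilon> *\<^sub>R b + ((1 - \<epsilon>) / 2) *\<^sub>R c" for \<epsilon>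
    by (simp add: y_def vec_eq_iff forall_2 field_simps)
  have y_cda: "y \<epsilon> = z1 \<epsilon> *\<^sub>R c + z2 \<epsilon> *\<^sub>R d + (1 - z1 \<epsilon> - z2 \<epsilon>) *\<^sub>R a" for \<epsilon>
  proof -
    have "Xd *\<^sub>R (y \<epsilon> - a) = Xd *\<^sub>R (z1 \<epsilon> *\<^sub>R (c - a) + z2 \<epsilon> *\<^sub>R (d - a))"
      using cross2_cramer[of "c - a" "d - a" "y \<epsilon> - a"] Xd
      by (simp add: Xd_def z1_def z2_def scaleR_add_right)
    then have "y \<epsilon> - a = z1 \<epsilon> *\<^sub>R (c - a) + z2 \<epsilon> *\<^sub>R (d - a)"
      using Xd by simp
    then show ?thesis by (simp add: algebra_simps)
  qed
  have z1: "z1 \<epsilon> = (1 - \<epsilon>) / 2 + \<epsilon> * (cross2 (b - a) (d - a) / Xd)"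
    and z2: "z2 \<epsilon> = \<epsilon> * (Xb / Xd)" for \<epsilon>
  proof -
    have "y \<epsilon> - a = ((1 - \<epsilon>) / 2) *\<^sub>R (c - a) + \<epsilon> *\<^sub>R (b - a)"
      by (simp add: y_def)
    then have c1: "cross2 (y \<epsilon> - a) (d - a) = ((1 - \<epsilon>) / 2) * Xd + \<epsilon> * cross2 (b - a) (d - a)"
      and c2: "cross2 (c - a) (y \<epsilon> - a) = \<epsilon> * Xb"
      unfolding Xb_def Xd_def by (simp_all add: cross2_add_left cross2_add_right cross2_scaleR_left
          cross2_scaleR_right cross2_self)
    show "z1 \<epsilon> = (1 - \<epsilon>) / 2 + \<epsilon> * (cross2 (b - a) (d - a) / Xd)"
      using Xd by (simp add: z1_def c1 add_divide_distrib)
    show "z2 \<epsilon> = \<epsilon> * (Xb / Xd)"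
      by (simp add: z2_def c2)
  qed
  have "((\<lambda>\<epsilon>. z1 \<epsilon>) \<longlongrightarrow> 1 / 2) (at_right 0)"
    unfolding z1 using Xd by (auto intro!: tendsto_eq_intros)
  then have "\<forall>\<^sub>F \<epsilon> in at_right 0. 0 < z1 \<epsilon>"
    by (rule order_tendstoD(1)) simp
  moreover have "((\<lambda>\<epsilon>. 1 - z1 \<epsilon> - z2 \<epsilon>) \<longlongrightarrow> 1 / 2) (at_right 0)"
    unfolding z1 z2 using Xd by (auto intro!: tendsto_eq_intros)
  then have "\<forall>\<^sub>F \<epsilon> in at_right 0. 0 < 1 - z1 \<epsilon> - z2 \<epsilon>"
    by (rule order_tendstoD(1)) simp
  moreover have "\<forall>\<^sub>F \<epsilon> in at_right (0::real). 0 < \<epsilon> \<and> \<epsilon> < 1"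
    unfolding eventually_at_right_field by (intro exI[of _ 1]) auto
  ultimately have "\<forall>\<^sub>F \<epsilon> in at_right 0. 0 < z1 \<epsilon> \<and> 0 < 1 - z1 \<epsilon> - z2 \<epsilon> \<and> 0 < \<epsilon> \<and> \<epsilon> < 1"
    by (simp add: eventually_conj_iff)
  then obtain \<epsilon> where \<epsilon>: "0 < z1 \<epsilon>" "0 < 1 - z1 \<epsilon> - z2 \<epsilon>" "0 < \<epsilon>" "\<epsilon> < 1"
    using eventually_happens trivial_limit_at_right_real by blast
  have "0 < z2 \<epsilon>" unfolding z2 using ratio \<epsilon>(3) by (rule mult_pos_pos[rotated])
  then have "y \<epsilon> \<in> interior (convex hull {c, d, a})"
    unfolding interior_convex_hull_3_minimal[OF cda dim2] using \<epsilon> y_cda[of \<epsilon>]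
    by (intro CollectI exI[of _ "z1 \<epsilon>"] exI[of _ "z2 \<epsilon>"] exI[of _ "1 - z1 \<epsilon> - z2 \<epsilon>"]) auto
  moreover have "y \<epsilon> \<in> interior (convex hull {a, b, c})"
    unfolding interior_convex_hull_3_minimal[OF abc dim2] using \<epsilon> y_abc[of \<epsilon>]
    by (intro CollectI exI[of _ "(1 - \<epsilon>) / 2"] exI[of _ \<epsilon>]) auto
  ultimately show ?thesis by blast
qed

lemma triangular_faces_opposite_sides:
  assumes abc: "triangular_face C S a b c" and cda: "triangular_face C S c d a" and "b \<noteq> d"
  shows "cross2 (c - a) (b - a) * cross2 (c - a) (d - a) < 0"
proof (rule ccontr)
  define T1 T2 where "T1 = convex hull {a, b, c}" and "T2 = convex hull {c, d, a}"
  have ncol: "\<not> collinear {a, b, c}" "\<not> collinear {c, d, a}"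
    and comps: "interior T1 \<in> components (- delaunay_drawing C S)"
      "interior T2 \<in> components (- delaunay_drawing C S)"
    using abc cda by (auto simp: triangular_face_def T1_def T2_def)
  have "cross2 (c - a) (b - a) \<noteq> 0" "cross2 (c - a) (d - a) \<noteq> 0"
    using ncol collinear_if_cross2_eq_0[of c a b] collinear_if_cross2_eq_0[of c a d]
    by (auto simp: insert_commute)
  moreover assume "\<not> ?thesis"
  ultimately have "cross2 (c - a) (b - a) * cross2 (c - a) (d - a) > 0"
    by (simp add: not_less less_le)
  then have meet: "interior T1 \<inter> interior T2 \<noteq> {}"
    unfolding T1_def T2_def by (rule triangle_interiors_meet_if_same_side[OF ncol])
  have "interior T1 \<noteq> {}" "interior T2 \<noteq> {}" using meet by auto
  then have "T1 = closure (interior T1)" "T2 = closure (interior T2)"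
    by (simp_all add: T1_def T2_def convex_closure_interior closure_closed
        compact_imp_closed finite_imp_compact_convex_hull)
  moreover have "interior T1 = interior T2"
    using components_eq[OF comps] meet by blast
  ultimately have "T1 = T2" by simp
  moreover have "b extreme_point_of T1"
    using ncol(1) by (simp add: T1_def extreme_point_of_convex_hull_affine_independent
        collinear_3_eq_affine_dependent)
  ultimately have "b \<in> {c, d, a}"
    unfolding T2_def by (blast dest: extreme_point_of_convex_hull)
  moreover have "b \<noteq> a" "b \<noteq> c" using ncol(1) by auto
  ultimately show False using \<open>b \<noteq> d\<close> by blast
qed

lemma angle_sum_across_chord_le_nearer:
  fixes H :: "pt set"
  assumes H: "convex H" "closed H" "a \<in> H" "c \<in> H" "b \<notin> H" "d \<notin> H"
    and fat: "cball x (\<alpha> * r) \<subseteq> H" "H \<subseteq> cball x r" and \<alpha>: "0 < \<alpha>" "\<alpha> \<le> 1"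
    and nearer: "dist x c \<le> dist x a" and "a \<noteq> c"
    and opposite: "cross2 (c - a) (b - a) * cross2 (c - a) (d - a) < 0"
  shows "angle a b c + angle a d c \<le> 2 * pi - 2 * arcsin \<alpha>"
proof -
  obtain \<sigma> where \<sigma>: "\<sigma>\<^sup>2 = 1" "\<sigma> * cross2 (c - a) (b - a) > 0" "(- \<sigma>) * cross2 (c - a) (d - a) > 0"
  proof (cases "cross2 (c - a) (b - a) > 0")
    case True
    then show ?thesis using opposite that[of 1] by (simp add: mult_less_0_iff)
  next
    case False
    then show ?thesis using opposite that[of "- 1"] by (simp add: mult_less_0_iff)
  qed
  have dist_xa: "0 < dist x a" "dist x a \<le> r"
    using nearer \<open>a \<noteq> c\<close> fat(2) H(3) by (auto simp: subset_iff)
  then have r: "0 \<le> \<alpha> * r" using \<alpha> by (intro mult_nonneg_nonneg) linarith+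
  define \<gamma> t where "\<gamma> = arcsin (min 1 (\<alpha> * r / dist x a))"
    and "t = \<sigma> * cross2 (c - a) (x - a) / inner (c - a) (x - a)"
  have "angle a b c \<le> pi - (\<gamma> + arctan t)"
    unfolding \<gamma>_def t_def
    by (rule angle_le_pi_minus_tangent_angle[OF H(1-5) fat(1) r nearer \<open>a \<noteq> c\<close> \<sigma>(1,2)])
  moreover have "angle a d c \<le> pi - (\<gamma> + arctan (- t))"
    using angle_le_pi_minus_tangent_angle[OF H(1-4,6) fat(1) r nearer \<open>a \<noteq> c\<close> _ \<sigma>(3)] \<sigma>(1)
    unfolding \<gamma>_def t_def by simp
  moreover have "arcsin \<alpha> \<le> \<gamma>"
  proof -
    have "\<alpha> * dist x a \<le> \<alpha> * r" using dist_xa \<alpha> by simp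
    then have "\<alpha> \<le> min 1 (\<alpha> * r / dist x a)" using dist_xa \<alpha> by (simp add: field_simps)
    then show ?thesis unfolding \<gamma>_def using \<alpha> by (intro arcsin_le_arcsin) auto
  qed
  ultimately show ?thesis by (simp add: arctan_minus)
qed

lemma angle_sum_across_chord_le:
  fixes H :: "pt set"
  assumes H: "convex H" "closed H" "a \<in> H" "c \<in> H" "b \<notin> H" "d \<notin> H"
    and fat: "cball x (\<alpha> * r) \<subseteq> H" "H \<subseteq> cball x r" and \<alpha>: "0 < \<alpha>" "\<alpha> \<le> 1"
    and "a \<noteq> c" and opposite: "cross2 (c - a) (b - a) * cross2 (c - a) (d - a) < 0"
  shows "angle a b c + angle c d a \<le> 2 * pi - 2 * arcsin \<alpha>"
proof (cases "dist x c \<le> dist x a")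
  case True
  from angle_sum_across_chord_le_nearer[OF H fat \<alpha> True \<open>a \<noteq> c\<close> opposite]
  show ?thesis by (simp add: angle_commute[of a d c])
next
  case False
  have "cross2 (a - c) (b - c) * cross2 (a - c) (d - c) < 0"
    using opposite by (simp add: cross2_triangle_swap[of a c b] cross2_triangle_swap[of a c d])
  from angle_sum_across_chord_le_nearer[OF H(1,2,4,3,5,6) fat \<alpha> _ _ this] False \<open>a \<noteq> c\<close>
  show ?thesis by (simp add: angle_commute[of c b a])
qed

lemma homothet_cball:
  assumes "l > 0"
  shows "homothet (cball x \<rho>) l t = cball (l *\<^sub>R x + t) (l * \<rho>)"
proof -
  have "homothet (cball x \<rho>) l t = (+) t ` (\<lambda>y. l *\<^sub>R y) ` cball x \<rho>"
    unfolding homothet_def image_image by (simp add: add.commute)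
  also have "\<dots> = (+) t ` cball (l *\<^sub>R x) (l * \<rho>)"
    using cball_scale[of l x \<rho>] assms by simp
  also have "\<dots> = cball (l *\<^sub>R x + t) (l * \<rho>)"
    using cball_translation[of t "l *\<^sub>R x" "l * \<rho>"] by (simp only: add.commute)
  finally show ?thesis .
qed

lemma fat_homothet:
  assumes "fat \<alpha> C" "l > 0"
  obtains x r where "cball x (\<alpha> * r) \<subseteq> homothet C l t" "homothet C l t \<subseteq> cball x r"
proof -
  obtain x r where "cball x (\<alpha> * r) \<subseteq> C" "C \<subseteq> cball x r"
    using assms(1) unfolding fat_def by blast
  then have "homothet (cball x (\<alpha> * r)) l t \<subseteq> homothet C l t"
    "homothet C l t \<subseteq> homothet (cball x r) l t"
    by (simp_all add: homothet_def image_mono)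
  then show ?thesis
    using that[of "l *\<^sub>R x + t" "l * r"] assms(2) by (simp add: homothet_cball mult.left_commute)
qed

lemma convex_body_homothet:
  assumes "convex_body C"
  shows "convex (homothet C l t)" "closed (homothet C l t)"
proof -
  have "homothet C l t = (\<lambda>y. t + l *\<^sub>R y) ` C" by (simp add: homothet_def add.commute)
  then show "convex (homothet C l t)" "closed (homothet C l t)"
    using assms by (simp_all add: convex_body_def convex_affinity compact_affinity compact_imp_closed)
qed

theorem mainTheorem17:
  fixes \<alpha> :: real and C S :: "pt set" and a b c d :: pt
  assumes "0 < \<alpha>" "\<alpha> \<le> 1"
    and "convex_body C" "fat \<alpha> C"
    and "finite S"
    and "triangular_face C S a b c" "triangular_face C S c d a"
    and "b \<noteq> d"
  shows "angle a b c + angle c d a \<le> 2 * pi - 2 * arcsin \<alpha>"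
proof -
  have "delaunay_edge C S c a" "b \<in> S - {a, c}" "d \<in> S - {a, c}"
    using assms(6,7) by (auto simp: triangular_face_def delaunay_edge_def)
  then obtain l t where "l > 0" "a \<noteq> c" and H: "a \<in> homothet C l t" "c \<in> homothet C l t"
    "b \<notin> homothet C l t" "d \<notin> homothet C l t"
    unfolding delaunay_edge_def by blast
  obtain x r where "cball x (\<alpha> * r) \<subseteq> homothet C l t" "homothet C l t \<subseteq> cball x r"
    using fat_homothet[OF assms(4) \<open>l > 0\<close>] .
  from angle_sum_across_chord_le[OF convex_body_homothet[OF assms(3)] H this assms(1,2) \<open>a \<noteq> c\<close>
      triangular_faces_opposite_sides[OF assms(6-8)]]
  show ?thesis .
qed

end
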